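(* Assume (A). If $c_1\ge c_1^F$, then $\inf_{t>t_0}\sup_{s\in(0,t)}\Upsilon(s,t)=L_{c_2}(t^F_{c_2})$.
   Context: $v:[0,\infty)\to[0,\infty)$ is continuous, $v(0)=0$, $\lim_{t\to\infty}v(t)/t^\alpha=0$ for some $\alpha<2$, and is the variance function of a centered Gaussian process $A$ on $\mathbb R$ with stationary increments, $A(0)=0$: $\mathrm{Var}(A(t)-A(s))=v(|t-s|)$; $\Gamma(s,t):=\tfrac12(v(|s|)+v(|t|)-v(|t-s|))$. Fix $b>0$, $c_1>c_2>0$, $t_0:=b/(c_1-c_2)$. For $0<s<t$, $\Sigma(s,t):=\begin{pmatrix}v(t)&\Gamma(s,t)\\ \Gamma(s,t)&v(s)\end{pmatrix}$ (assumed nonsingular), $\Lambda_{s,t}(y,z):=\frac12(y,z)\Sigma(t-s,t)^{-1}(y,z)^\top$, $k(s,t):=\frac{\Gamma(s,t)}{v(t)}(b+c_2t)$, $\Upsilon(s,t):=\Lambda_{s,t}(b+c_2t,b+c_2t-c_1s)$ if $k(s,t)>c_1s$ and $\Upsilon(s,t):=(b+c_2t)^2/(2v(t))$ otherwise. $L_c(t):=(b+ct)^2/(2v(t))$; $t^F_{c_2}$ denotes a minimizer of $L_{c_2}$ over $t>0$, and $c_1^F:=\sup_{s\in(0,t^F_{c_2})}k(s,t^F_{c_2})/s$. Assumption (A): $\sqrt v\in C^2([0,\infty))$, strictly increasing and strictly concave. *)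

theory Defs
  imports "HOL-Probability.Probability"
begin

definition centered_gaussian_rv :: "'a measure \<Rightarrow> ('a \<Rightarrow> real) \<Rightarrow> bool" where
  "centered_gaussian_rv M X \<longleftrightarrow>
     X \<in> borel_measurable M \<and> integrable M (\<lambda>x. (X x)^2) \<and>
     (\<forall>u. char (distr M borel X) u =
            complex_of_real (exp (- (u^2 * (\<integral>x. (X x)^2 \<partial>M)) / 2)))"

text \<open>v is the variance function of a centred Gaussian process A on the real line with
stationary increments and A(0) = 0 (the process is realised on the path space).\<close>
definition gaussian_si_variance :: "(real \<Rightarrow> real) \<Rightarrow> bool" where
  "gaussian_si_variance v \<longleftrightarrow>
     (\<exists>(M::(real \<Rightarrow> real) measure) (A::real \<Rightarrow> (real \<Rightarrow> real) \<Rightarrow> real).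
        prob_space M \<and>
        (AE \<omega> in M. A 0 \<omega> = 0) \<and>
        (\<forall>(F::real set) (c::real \<Rightarrow> real). finite F \<longrightarrow>
            centered_gaussian_rv M (\<lambda>\<omega>. \<Sum>t\<in>F. c t * A t \<omega>)) \<and>
        (\<forall>s t. prob_space.variance M (\<lambda>\<omega>. A t \<omega> - A s \<omega>) = v \<bar>t - s\<bar>))"

definition Gam :: "(real \<Rightarrow> real) \<Rightarrow> real \<Rightarrow> real \<Rightarrow> real" where
  "Gam v s t = (v \<bar>s\<bar> + v \<bar>t\<bar> - v \<bar>t - s\<bar>) / 2"

text \<open>Sigma(s,t) = [[v t, Gam s t],[Gam s t, v s]]; its determinant.\<close>
definition detSigma :: "(real \<Rightarrow> real) \<Rightarrow> real \<Rightarrow> real \<Rightarrow> real" where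
  "detSigma v s t = v t * v s - (Gam v s t)^2"

text \<open>Lambda_{s,t}(y,z) = 1/2 (y,z) Sigma(t-s,t)^{-1} (y,z)^T, written out with the explicit
inverse of the symmetric 2x2 matrix.\<close>
definition Lam :: "(real \<Rightarrow> real) \<Rightarrow> real \<Rightarrow> real \<Rightarrow> real \<Rightarrow> real \<Rightarrow> real" where
  "Lam v s t y z =
     (v (t - s) * y^2 - 2 * Gam v (t - s) t * y * z + v t * z^2) / (2 * detSigma v (t - s) t)"

definition kfun :: "(real \<Rightarrow> real) \<Rightarrow> real \<Rightarrow> real \<Rightarrow> real \<Rightarrow> real \<Rightarrow> real" where
  "kfun v b c2 s t = Gam v s t / v t * (b + c2 * t)"

definition Ups :: "(real \<Rightarrow> real) \<Rightarrow> real \<Rightarrow> real \<Rightarrow> real \<Rightarrow> real \<Rightarrow> real \<Rightarrow> real" where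
  "Ups v b c1 c2 s t =
     (if kfun v b c2 s t > c1 * s
      then Lam v s t (b + c2 * t) (b + c2 * t - c1 * s)
      else (b + c2 * t)^2 / (2 * v t))"

definition Lc :: "(real \<Rightarrow> real) \<Rightarrow> real \<Rightarrow> real \<Rightarrow> real \<Rightarrow> real" where
  "Lc v b c t = (b + c * t)^2 / (2 * v t)"

definition assumption_A :: "(real \<Rightarrow> real) \<Rightarrow> bool" where
  "assumption_A v \<longleftrightarrow>
     (\<exists>D D2. (\<forall>x\<ge>0. ((\<lambda>y. sqrt (v y)) has_real_derivative D x) (at x within {0..})) \<and>
             (\<forall>x\<ge>0. (D has_real_derivative D2 x) (at x within {0..})) \<and>
             continuous_on {0..} D2) \<and>
     strict_mono_on {0..} (\<lambda>x. sqrt (v x)) \<and>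
     (\<forall>x\<ge>0. \<forall>y\<ge>0. \<forall>u. x \<noteq> y \<longrightarrow> 0 < u \<longrightarrow> u < 1 \<longrightarrow>
        sqrt (v (u * x + (1 - u) * y)) > u * sqrt (v x) + (1 - u) * sqrt (v y))"

end

theory Submission
  imports Defs
begin

text \<open>Write f = sqrt v. Strict concavity of f with f(0) = 0 makes f strictly subadditive, so
  f(t), f(s) and f(t - s) satisfy strict triangle inequalities; by Heron's formula det Sigma(t - s, t)
  is then positive, and completing the square in Lambda gives Upsilon(s, t) >= L_c2(t) >= L_c2(tF)
  for all s < t. Conversely c1 >= c1F says k(s, tF) <= c1 s for every s < tF, so Upsilon(., tF) is
  identically L_c2(tF); tF is admissible, i.e. tF > t0, because c1F > (b + c2 tF)/tF, which
  follows from Gamma(s, tF)/s > v(tF)/tF for s close to tF.\<close>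

definition strict_concave_on :: "real set \<Rightarrow> (real \<Rightarrow> real) \<Rightarrow> bool" where
  "strict_concave_on S f \<longleftrightarrow>
     (\<forall>x\<in>S. \<forall>y\<in>S. \<forall>u. x \<noteq> y \<longrightarrow> 0 < u \<longrightarrow> u < 1 \<longrightarrow>
        u * f x + (1 - u) * f y < f (u * x + (1 - u) * y))"

lemma strict_concave_onD:
  assumes "strict_concave_on S f" "x \<in> S" "y \<in> S" "x \<noteq> y" "0 < u" "u < 1"
  shows "u * f x + (1 - u) * f y < f (u * x + (1 - u) * y)"
  using assms unfolding strict_concave_on_def by blast

lemma strict_concave_on_slope_decreasing:
  assumes conc: "strict_concave_on {0..} f" and "0 \<le> p" "p < q" "q < t"
  shows "(f t - f q) / (t - q) < (f t - f p) / (t - p)"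
proof -
  define u where "u = (t - q) / (t - p)"
  have u: "0 < u" "u < 1" using assms(2-4) by (auto simp: u_def)
  have q: "u * p + (1 - u) * t = q"
    using assms(2-4) unfolding u_def by (simp add: divide_simps) argo
  have "u * f p + (1 - u) * f t < f q"
    using strict_concave_onD[OF conc, of p t u] assms(2-4) u q by auto
  then have "f t - f q < u * (f t - f p)" by (simp add: algebra_simps)
  then show ?thesis using assms(2-4) by (simp add: u_def field_simps)
qed

lemma strict_concave_on_chord_lt:
  assumes conc: "strict_concave_on {0..} f" and f0: "f 0 = 0"
    and "0 < x" "0 < u" "u < 1"
  shows "u * f x < f (u * x)"
  using strict_concave_onD[OF conc, of x 0 u] assms by simp

lemma strict_concave_on_subadditive:
  assumes conc: "strict_concave_on {0..} f" and f0: "f 0 = 0" and "0 < r" "0 < s"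
  shows "f (r + s) < f r + f s"
proof -
  have "r + s \<noteq> 0" using assms(3,4) by simp
  then have "r / (r + s) * f (r + s) < f r" "s / (r + s) * f (r + s) < f s"
    using strict_concave_on_chord_lt[OF conc f0, of "r + s" "r / (r + s)"]
      strict_concave_on_chord_lt[OF conc f0, of "r + s" "s / (r + s)"] assms(3,4) by simp_all
  moreover have "r / (r + s) * f (r + s) + s / (r + s) * f (r + s) = f (r + s)"
    using \<open>r + s \<noteq> 0\<close> by (simp flip: distrib_right add_divide_distrib)
  ultimately show ?thesis by linarith
qed

lemma tendsto_square_div_at_right_0:
  fixes f :: "real \<Rightarrow> real"
  assumes der: "(f has_real_derivative D) (at 0 within {0..})" and f0: "f 0 = 0"
  shows "((\<lambda>x. (f x)\<^sup>2 / x) \<longlongrightarrow> 0) (at_right 0)"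
proof -
  have der': "(f has_real_derivative D) (at_right 0)"
    using der by (rule has_field_derivative_subset) auto
  then have "((\<lambda>x. f x / x) \<longlongrightarrow> D) (at_right 0)"
    using f0 by (simp add: has_field_derivative_iff)
  moreover have "(f \<longlongrightarrow> 0) (at_right 0)"
    using DERIV_continuous[OF der'] f0 by (simp add: continuous_within)
  ultimately have "((\<lambda>x. f x * (f x / x)) \<longlongrightarrow> 0 * D) (at_right 0)"
    by (intro tendsto_mult)
  then show ?thesis by (simp add: power2_eq_square)
qed

lemma detSigma_pos:
  fixes f v :: "real \<Rightarrow> real"
  assumes conc: "strict_concave_on {0..} f" and mono: "strict_mono_on {0..} f" and f0: "f 0 = 0"
    and v_sq: "\<And>x. 0 \<le> x \<Longrightarrow> v x = (f x)\<^sup>2"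
    and r: "0 < r" "r < t"
  shows "0 < detSigma v r t"
proof -
  define a b c where "a = f t" and "b = f r" and "c = f (t - r)"
  have v_abc: "v t = a\<^sup>2" "v r = b\<^sup>2" "v (t - r) = c\<^sup>2"
    using r by (simp_all add: v_sq a_def b_def c_def)
  have Gam_abc: "Gam v r t = (b\<^sup>2 + a\<^sup>2 - c\<^sup>2) / 2"
    using r v_abc by (simp add: Gam_def)
  have heron: "4 * detSigma v r t = (c\<^sup>2 - (a - b)\<^sup>2) * ((a + b)\<^sup>2 - c\<^sup>2)"
    unfolding detSigma_def v_abc Gam_abc by (simp add: field_simps power2_eq_square)
  have "f 0 < f r" "f 0 < f (t - r)" "f r < f t" "f (t - r) < f t"
    using strict_mono_onD[OF mono] r by auto
  then have "0 \<le> b" "b < a" "0 \<le> c" "c < a"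
    using f0 by (simp_all add: a_def b_def c_def)
  moreover have "a < b + c"
    using strict_concave_on_subadditive[OF conc f0, of r "t - r"] r by (simp add: a_def b_def c_def)
  ultimately have "0 < (c\<^sup>2 - (a - b)\<^sup>2) * ((a + b)\<^sup>2 - c\<^sup>2)"
    by (auto intro!: mult_pos_pos power_strict_mono)
  then show ?thesis using heron by linarith
qed

lemma Lam_ge_first_marginal:
  assumes det: "0 < detSigma v (t - s) t" and vt: "0 < v t"
  shows "y\<^sup>2 / (2 * v t) \<le> Lam v s t y z"
proof -
  define Q where "Q = v (t - s) * y\<^sup>2 - 2 * Gam v (t - s) t * y * z + v t * z\<^sup>2"
  have "v t * Q - detSigma v (t - s) t * y\<^sup>2 = (v t * z - Gam v (t - s) t * y)\<^sup>2"
    unfolding Q_def detSigma_def by (simp add: algebra_simps power2_eq_square)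
  then have "detSigma v (t - s) t * y\<^sup>2 \<le> v t * Q"
    by (metis diff_ge_0_iff_ge zero_le_power2)
  then have "y\<^sup>2 / (2 * v t) \<le> Q / (2 * detSigma v (t - s) t)"
    using det vt by (simp add: divide_simps mult.commute)
  then show ?thesis unfolding Lam_def Q_def .
qed

lemma Lc_le_Ups:
  assumes "0 < detSigma v (t - s) t" and "0 < v t"
  shows "Lc v b c2 t \<le> Ups v b c1 c2 s t"
  using Lam_ge_first_marginal[OF assms] by (simp add: Ups_def Lc_def)

lemma Ups_eq_Lc:
  assumes "kfun v b c2 s t \<le> c1 * s"
  shows "Ups v b c1 c2 s t = Lc v b c2 t"
  using assms by (simp add: Ups_def Lc_def)

lemma Lc_le_SUP_Ups:
  assumes t: "0 < t" and det: "\<And>s. s \<in> {0<..<t} \<Longrightarrow> 0 < detSigma v (t - s) t"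
    and vt: "0 < v t"
  shows "ereal (Lc v b c2 t) \<le> (SUP s\<in>{0<..<t}. ereal (Ups v b c1 c2 s t))"
proof (rule SUP_upper2)
  show "t / 2 \<in> {0<..<t}" using t by simp
  show "ereal (Lc v b c2 t) \<le> ereal (Ups v b c1 c2 (t / 2) t)"
    using Lc_le_Ups[OF det vt] t by simp
qed

lemma SUP_Ups_eq_Lc:
  assumes t: "0 < t" and c1: "\<And>s. s \<in> {0<..<t} \<Longrightarrow> kfun v b c2 s t / s \<le> c1"
  shows "(SUP s\<in>{0<..<t}. ereal (Ups v b c1 c2 s t)) = ereal (Lc v b c2 t)"
proof -
  have "Ups v b c1 c2 s t = Lc v b c2 t" if "s \<in> {0<..<t}" for s
    using c1[OF that] that by (intro Ups_eq_Lc) (simp add: pos_divide_le_eq)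
  then show ?thesis using t by simp
qed

lemma square_increment_le_chord_slope:
  fixes f v :: "real \<Rightarrow> real"
  assumes conc: "strict_concave_on {0..} f"
    and v_sq: "\<And>x. 0 \<le> x \<Longrightarrow> v x = (f x)\<^sup>2"
    and ft: "0 \<le> f t" and u: "0 < u" "u < t / 2"
  shows "v t - v (t - u) \<le> 2 * f t * ((f t - f (t / 2)) / (t / 2) * u)"
proof -
  have "f t - f (t - u) < (f t - f (t / 2)) / (t / 2) * u"
    using strict_concave_on_slope_decreasing[OF conc, of "t / 2" "t - u" t] u
    by (simp add: field_simps)
  have "v t - v (t - u) = (f t)\<^sup>2 - (f (t - u))\<^sup>2"
    using u by (simp add: v_sq)
  also have "\<dots> \<le> 2 * f t * (f t - f (t - u))"
    using zero_le_power2[of "f t - f (t - u)"] by (simp add: power2_eq_square algebra_simps)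
  also have "\<dots> \<le> 2 * f t * ((f t - f (t / 2)) / (t / 2) * u)"
    using \<open>f t - f (t - u) < _\<close> ft by (intro mult_left_mono) auto
  finally show ?thesis .
qed

text \<open>Take s = t - u with u small: the claim becomes t (v(t) - v(t - u)) + t v(u) < 2 u v(t).
  Concavity bounds the first term by c u with c < 2 v(t), and t v(u) = o(u) because sqrt v is
  differentiable at 0.\<close>
lemma exists_Gam_slope_gt:
  fixes f v :: "real \<Rightarrow> real"
  assumes conc: "strict_concave_on {0..} f" and f0: "f 0 = 0"
    and v_sq: "\<And>x. 0 \<le> x \<Longrightarrow> v x = (f x)\<^sup>2"
    and der: "(f has_real_derivative D) (at 0 within {0..})"
    and t: "0 < t" and ft: "0 < f t"
  shows "\<exists>s\<in>{0<..<t}. v t / t < Gam v s t / s"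
proof -
  define \<sigma> where "\<sigma> = (f t - f (t / 2)) / (t / 2)"
  have "f t / 2 < f (t / 2)"
    using strict_concave_on_chord_lt[OF conc f0 t, of "1 / 2"] by simp
  then have margin: "0 < 2 * f t * (f t - t * \<sigma>)"
    using t ft by (simp add: \<sigma>_def field_simps)
  have "((\<lambda>u. v u / u) \<longlongrightarrow> 0) (at_right 0)"
  proof (rule Lim_transform_eventually)
    show "((\<lambda>u. (f u)\<^sup>2 / u) \<longlongrightarrow> 0) (at_right 0)"
      using der f0 by (rule tendsto_square_div_at_right_0)
    show "\<forall>\<^sub>F u in at_right 0. (f u)\<^sup>2 / u = v u / u"
      by (auto simp: eventually_at_right_field v_sq intro!: exI[of _ 1])
  qed
  then have "\<forall>\<^sub>F u in at_right 0. v u / u < 2 * f t * (f t - t * \<sigma>) / t"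
    using margin t by (intro order_tendstoD) auto
  moreover have "\<forall>\<^sub>F u in at_right 0. u \<in> {0<..<t / 2}"
    using t by (intro eventually_at_right_real) simp
  ultimately have "\<forall>\<^sub>F u in at_right 0. u \<in> {0<..<t / 2} \<and> v u / u < 2 * f t * (f t - t * \<sigma>) / t"
    by eventually_elim simp
  then obtain u where u: "0 < u" "u < t / 2" "v u / u < 2 * f t * (f t - t * \<sigma>) / t"
    by (auto dest: eventually_happens)
  have "t * (v t - v (t - u)) \<le> t * (2 * f t * (\<sigma> * u))"
    using square_increment_le_chord_slope[OF conc v_sq, of t u] ft t u
    by (intro mult_left_mono) (simp_all add: \<sigma>_def)
  moreover have "t * v u < 2 * u * f t * (f t - t * \<sigma>)"
    using t u by (simp add: field_simps)
  ultimately have "t * (v t - v (t - u)) + t * v u < 2 * u * v t"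
    using t by (simp add: v_sq power2_eq_square algebra_simps)
  then have "v t / t < Gam v (t - u) t / (t - u)"
    using t u by (simp add: Gam_def field_simps)
  then show ?thesis using t u by (intro bexI[of _ "t - u"]) auto
qed

lemma kfun_slope_gt:
  assumes vt: "0 < v t" and bt: "0 < b + c2 * t"
    and slope: "v t / t < Gam v s t / s"
  shows "(b + c2 * t) / t < kfun v b c2 s t / s"
proof -
  have "(b + c2 * t) / t = v t / t * ((b + c2 * t) / v t)"
    using vt by simp
  also have "\<dots> < Gam v s t / s * ((b + c2 * t) / v t)"
    using slope vt bt by (intro mult_strict_right_mono) auto
  also have "\<dots> = kfun v b c2 s t / s"
    by (simp add: kfun_def)
  finally show ?thesis .
qed

lemma t0_lt_of_Gam_slope_gt:
  assumes s: "s \<in> {0<..<t}" and vt: "0 < v t" and b: "0 < b" and c2: "0 < c2" and c12: "c2 < c1"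
    and slope: "v t / t < Gam v s t / s" and c1: "kfun v b c2 s t / s \<le> c1"
  shows "b / (c1 - c2) < t"
proof -
  have "0 < b + c2 * t"
    using b c2 s by (simp add: add_pos_pos)
  then have "(b + c2 * t) / t < kfun v b c2 s t / s"
    using kfun_slope_gt[OF vt _ slope] by blast
  then have "(b + c2 * t) / t < c1"
    using c1 by linarith
  then show ?thesis
    using s c12 by (simp add: field_simps)
qed

lemma INF_SUP_Ups_eq_Lc:
  assumes det_pos: "\<And>s t. s \<in> {0<..<t} \<Longrightarrow> 0 < detSigma v (t - s) t"
    and v_pos: "\<And>t. 0 < t \<Longrightarrow> 0 < v t"
    and t0: "0 \<le> t0" "t0 < tF"
    and tF_min: "\<forall>t>0. Lc v b c2 tF \<le> Lc v b c2 t"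
    and c1_ge: "\<forall>s\<in>{0<..<tF}. kfun v b c2 s tF / s \<le> c1"
  shows "(INF t\<in>{t0<..}. SUP s\<in>{0<..<t}. ereal (Ups v b c1 c2 s t)) = ereal (Lc v b c2 tF)"
proof (rule antisym)
  show "(INF t\<in>{t0<..}. SUP s\<in>{0<..<t}. ereal (Ups v b c1 c2 s t)) \<le> ereal (Lc v b c2 tF)"
    using SUP_Ups_eq_Lc[of tF v b c2 c1] t0 c1_ge by (intro INF_lower2[of tF]) simp_all
  show "ereal (Lc v b c2 tF) \<le> (INF t\<in>{t0<..}. SUP s\<in>{0<..<t}. ereal (Ups v b c1 c2 s t))"
  proof (rule INF_greatest)
    fix t assume "t \<in> {t0<..}"
    then have t: "0 < t" using t0 by simp
    have "ereal (Lc v b c2 tF) \<le> ereal (Lc v b c2 t)"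
      using tF_min t by simp
    also have "\<dots> \<le> (SUP s\<in>{0<..<t}. ereal (Ups v b c1 c2 s t))"
      using Lc_le_SUP_Ups[OF t det_pos v_pos[OF t]] .
    finally show "ereal (Lc v b c2 tF) \<le> (SUP s\<in>{0<..<t}. ereal (Ups v b c1 c2 s t))" .
  qed
qed

lemma assumption_A_sqrtD:
  assumes "assumption_A v"
  shows "strict_concave_on {0..} (\<lambda>x. sqrt (v x))"
    and "strict_mono_on {0..} (\<lambda>x. sqrt (v x))"
    and "\<exists>D. ((\<lambda>x. sqrt (v x)) has_real_derivative D) (at 0 within {0..})"
  using assms unfolding assumption_A_def strict_concave_on_def by auto

theorem corollary3p7:
  fixes v :: "real \<Rightarrow> real" and b c1 c2 tF :: real
  assumes v_nonneg: "\<forall>t\<ge>0. v t \<ge> 0"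
    and v_cont: "continuous_on {0..} v"
    and v0: "v 0 = 0"
    and v_growth: "\<exists>\<alpha><2. ((\<lambda>t. v t / t powr \<alpha>) \<longlongrightarrow> 0) at_top"
    and v_gauss: "gaussian_si_variance v"
    and Sigma_nonsing: "\<forall>s t. 0 < s \<longrightarrow> s < t \<longrightarrow> detSigma v s t \<noteq> 0"
    and A: "assumption_A v"
    and b: "b > 0" and c2: "c2 > 0" and c12: "c1 > c2"
    and tF_pos: "tF > 0"
    and tF_min: "\<forall>t>0. Lc v b c2 tF \<le> Lc v b c2 t"
    and c1_ge: "\<forall>s\<in>{0<..<tF}. kfun v b c2 s tF / s \<le> c1"
  shows "(INF t\<in>{b / (c1 - c2)<..}. SUP s\<in>{0<..<t}. ereal (Ups v b c1 c2 s t))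
           = ereal (Lc v b c2 tF)"
proof -
  define f where "f x = sqrt (v x)" for x
  have conc: "strict_concave_on {0..} f" and mono: "strict_mono_on {0..} f"
    and "\<exists>D. (f has_real_derivative D) (at 0 within {0..})"
    using assumption_A_sqrtD[OF A] by (simp_all add: f_def[abs_def])
  then obtain D where der: "(f has_real_derivative D) (at 0 within {0..})" by blast
  have f0: "f 0 = 0" and v_sq: "\<And>x. 0 \<le> x \<Longrightarrow> v x = (f x)\<^sup>2"
    using v0 v_nonneg by (simp_all add: f_def)
  have f_pos: "0 < f t" if "0 < t" for t
    using strict_mono_onD[OF mono, of 0 t] that f0 by simp
  have v_pos: "0 < v t" if "0 < t" for t
    using f_pos[OF that] v_sq that by simp
  have det_pos: "0 < detSigma v (t - s) t" if "s \<in> {0<..<t}" for s t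
    using detSigma_pos[OF conc mono f0 v_sq] that by simp
  obtain s where s: "s \<in> {0<..<tF}" "v tF / tF < Gam v s tF / s"
    using exists_Gam_slope_gt[OF conc f0 v_sq der tF_pos f_pos[OF tF_pos]] by blast
  then have "b / (c1 - c2) < tF"
    using t0_lt_of_Gam_slope_gt v_pos[OF tF_pos] b c2 c12 c1_ge by blast
  moreover have "0 \<le> b / (c1 - c2)"
    using b c12 by simp
  ultimately show ?thesis
    using INF_SUP_Ups_eq_Lc[OF det_pos v_pos] tF_min c1_ge by blast
qed

end
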